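(* There is an absolute constant $C>0$ such that if $H_1=(V,\mathcal{E}_1)$ and $H_2=(V,\mathcal{E}_2)$ are tri-hypergraphs on the same ground set, each of VC-dimension at most $d$ with $d\geq1$, then the intersection tri-hypergraph $H_1\cap H_2$ has VC-dimension at most $Cd$.
   Context: A tri-hypergraph is a pair $H=(V,\mathcal{E})$ where $V$ is a finite set and $\mathcal{E}$ is a collection of ordered partitions $(B,R,W)$ of $V$ into three (possibly empty) parts (tri-edges). $X\subseteq V$ is shattered if for every $Y\subseteq X$ there is a tri-edge with $X\cap B=X\cap(B\cup R)=Y$; the VC-dimension is the largest size of a shattered set. For tri-edges $e_1=(B_1,R_1,W_1)$, $e_2=(B_2,R_2,W_2)$, $e_1\cap e_2=(B,R,W)$ with $B=B_1\cap B_2$, $R=((B_1\cup R_1)\cap(B_2\cup R_2))\setminus B$ and $W=V\setminus(B\cup R)$. $H_1\cap H_2=(V,\{e_1\cap e_2:e_1\in\mathcal{E}_1,e_2\in\mathcal{E}_2\})$. *)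

theory Defs
  imports Complex_Main
begin

type_synonym 'a triedge = "'a set \<times> 'a set \<times> 'a set"

definition tri_hypergraph :: "'a set \<Rightarrow> 'a triedge set \<Rightarrow> bool" where
  "tri_hypergraph V E \<longleftrightarrow> finite V \<and>
     (\<forall>(B, R, W) \<in> E. B \<union> R \<union> W = V \<and> B \<inter> R = {} \<and> B \<inter> W = {} \<and> R \<inter> W = {})"

definition tri_shattered :: "'a set \<Rightarrow> 'a triedge set \<Rightarrow> 'a set \<Rightarrow> bool" where
  "tri_shattered V E X \<longleftrightarrow> X \<subseteq> V \<and>
     (\<forall>Y. Y \<subseteq> X \<longrightarrow> (\<exists>(B, R, W) \<in> E. X \<inter> B = Y \<and> X \<inter> (B \<union> R) = Y))"

(* largest size of a shattered set; 0 if no set is shattered (only when E = {}) *)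
definition tri_vc_dim :: "'a set \<Rightarrow> 'a triedge set \<Rightarrow> nat" where
  "tri_vc_dim V E = Max ({card X | X. tri_shattered V E X} \<union> {0})"

definition triedge_inter :: "'a set \<Rightarrow> 'a triedge \<Rightarrow> 'a triedge \<Rightarrow> 'a triedge" where
  "triedge_inter V e1 e2 = (case e1 of (B1, R1, W1) \<Rightarrow> case e2 of (B2, R2, W2) \<Rightarrow>
     (let B = B1 \<inter> B2; R = ((B1 \<union> R1) \<inter> (B2 \<union> R2)) - B in (B, R, V - (B \<union> R))))"

definition tri_inter :: "'a set \<Rightarrow> 'a triedge set \<Rightarrow> 'a triedge set \<Rightarrow> 'a triedge set" where
  "tri_inter V E1 E2 = {triedge_inter V e1 e2 | e1 e2. e1 \<in> E1 \<and> e2 \<in> E2}"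

end

theory Submission
  imports Defs
begin

text \<open>
  For \<open>Z \<subseteq> V\<close>, the traces \<open>Z \<inter> B\<close> of those tri-edges \<open>(B, R, W)\<close> of \<open>H\<close> with \<open>R \<inter> Z = {}\<close>
  form a set system on \<open>Z\<close> whose shattered sets are shattered by \<open>H\<close>; by Pajor's lemma it has
  at most \<open>5^d (6/5)^|Z|\<close> members if \<open>H\<close> has VC-dimension at most \<open>d\<close>.
  Now let \<open>X\<close>, \<open>|X| = n\<close>, be shattered by \<open>H1 \<inter> H2\<close> and count pairs \<open>Y, Z \<subseteq> X\<close> such that \<open>Y \<inter> Z\<close>
  is such a trace of \<open>H1\<close> on \<open>Z\<close> and \<open>Y - Z\<close> one of \<open>H2\<close> on \<open>X - Z\<close>. If \<open>e1 \<inter> e2\<close> cuts out \<open>Y\<close>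
  from \<open>X\<close>, then \<open>Z\<close> may be the white points of \<open>e1\<close> in \<open>X\<close> together with any subset of \<open>Y\<close>,
  so there are at least \<open>\<Sum>_Y 2^|Y| = 3^n\<close> pairs. Conversely, for fixed \<open>Z\<close> the set \<open>Y\<close> is
  determined by two traces, so there are at most \<open>2^n 25^d (6/5)^n\<close> pairs. Hence
  \<open>(5/4)^n \<le> 25^d\<close> and \<open>n \<le> 15 d\<close>.
\<close>

definition shatters :: "'a set set \<Rightarrow> 'a set \<Rightarrow> bool" where
  "shatters F A \<longleftrightarrow> (\<forall>Y \<subseteq> A. \<exists>S \<in> F. A \<inter> S = Y)"

lemma card_eq_card_delete_add_card_pairs:
  assumes "finite F"
  shows "card F = card ((\<lambda>S. S - {x}) ` F) + card {S \<in> F. x \<notin> S \<and> insert x S \<in> F}"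
proof -
  define Fout where "Fout = {S \<in> F. x \<notin> S}"
  define Fin where "Fin = {S \<in> F. x \<in> S}"
  define G where "G = (\<lambda>S. S - {x}) ` Fin"
  have fin: "finite Fout" "finite G"
    using assms by (simp_all add: Fout_def Fin_def G_def)
  have F_eq: "F = Fout \<union> Fin"
    by (auto simp: Fout_def Fin_def)
  have "(\<lambda>S. S - {x}) ` Fout = Fout"
    by (rule image_cong[where g = id, simplified]) (auto simp: Fout_def)
  then have "(\<lambda>S. S - {x}) ` F = Fout \<union> G"
    unfolding G_def by (subst F_eq) (simp only: image_Un)
  moreover have "Fout \<inter> G = {S \<in> F. x \<notin> S \<and> insert x S \<in> F}"
  proof (intro equalityI subsetI)
    fix S assume "S \<in> Fout \<inter> G"
    then obtain T where "S \<in> F" "x \<notin> S" "T \<in> F" "x \<in> T" "S = T - {x}"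
      by (auto simp: Fout_def Fin_def G_def)
    then show "S \<in> {S \<in> F. x \<notin> S \<and> insert x S \<in> F}"
      by (simp add: insert_absorb)
  next
    fix S assume S: "S \<in> {S \<in> F. x \<notin> S \<and> insert x S \<in> F}"
    then have "insert x S \<in> Fin" "S = insert x S - {x}"
      by (auto simp: Fin_def)
    with S show "S \<in> Fout \<inter> G"
      by (auto simp: Fout_def G_def)
  qed
  moreover have "card G = card Fin"
    unfolding G_def by (rule card_image) (auto simp: Fin_def inj_on_def)
  moreover have "card F = card Fout + card Fin"
    using assms unfolding F_eq by (intro card_Un_disjoint) (auto simp: Fout_def Fin_def)
  ultimately show ?thesis
    using card_Un_Int[OF fin] by simp
qed

lemma shatters_delete_imp_shatters:
  assumes "shatters ((\<lambda>S. S - {x}) ` F) A" "x \<notin> A"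
  shows "shatters F A"
  unfolding shatters_def
proof (intro allI impI)
  fix Y assume "Y \<subseteq> A"
  then obtain S where "S \<in> F" "A \<inter> (S - {x}) = Y"
    using assms(1) by (auto simp: shatters_def)
  moreover have "A \<inter> (S - {x}) = A \<inter> S"
    using assms(2) by blast
  ultimately show "\<exists>S \<in> F. A \<inter> S = Y"
    by auto
qed

lemma shatters_pairs_imp_shatters_insert:
  assumes "shatters {S \<in> F. x \<notin> S \<and> insert x S \<in> F} A"
  shows "shatters F (insert x A)"
  unfolding shatters_def
proof (intro allI impI)
  fix Y assume Y: "Y \<subseteq> insert x A"
  then have "Y - {x} \<subseteq> A" by blast
  then obtain S where S: "S \<in> F" "x \<notin> S" "insert x S \<in> F" "A \<inter> S = Y - {x}"
    using assms unfolding shatters_def by blast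
  show "\<exists>S \<in> F. insert x A \<inter> S = Y"
  proof (cases "x \<in> Y")
    case True
    then have "insert x A \<inter> insert x S = Y" using S(4) Y by blast
    with S(3) show ?thesis by blast
  next
    case False
    then have "insert x A \<inter> S = Y" using S(2,4) Y by blast
    with S(1) show ?thesis by blast
  qed
qed

lemma card_le_card_shattered:
  assumes "finite Z" "F \<subseteq> Pow Z"
  shows "card F \<le> card {A \<in> Pow Z. shatters F A}"
  using assms
proof (induction Z arbitrary: F rule: finite_induct)
  case empty
  then have "F = {} \<or> F = {{}}" by (simp add: subset_singleton_iff)
  then show ?case
  proof
    assume "F = {{}}"
    moreover have "{A \<in> Pow {}. shatters {{}} A} = {{}}"
      by (auto simp: shatters_def)
    ultimately show ?case by (metis order.refl)
  qed simp
next
  case (insert x Z)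
  define F0 where "F0 = (\<lambda>S. S - {x}) ` F"
  define F1 where "F1 = {S \<in> F. x \<notin> S \<and> insert x S \<in> F}"
  define Sh0 where "Sh0 = {A \<in> Pow Z. shatters F0 A}"
  define Sh1 where "Sh1 = {A \<in> Pow Z. shatters F1 A}"
  have "finite F"
    using insert by (meson finite_Pow_iff finite_insert finite_subset)
  then have "card F = card F0 + card F1"
    unfolding F0_def F1_def by (rule card_eq_card_delete_add_card_pairs)
  also have "\<dots> \<le> card Sh0 + card Sh1"
  proof (rule add_mono)
    show "card F0 \<le> card Sh0"
      unfolding Sh0_def using insert.prems by (intro insert.IH) (auto simp: F0_def)
    show "card F1 \<le> card Sh1"
      unfolding Sh1_def using insert.prems by (intro insert.IH) (auto simp: F1_def)
  qed
  also have "card Sh1 = card (insert x ` Sh1)"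
    using insert.hyps(2) by (intro card_image[symmetric]) (auto simp: Sh1_def inj_on_def)
  also have "card Sh0 + \<dots> = card (Sh0 \<union> insert x ` Sh1)"
    using insert.hyps by (intro card_Un_disjoint[symmetric]) (auto simp: Sh0_def Sh1_def)
  also have "\<dots> \<le> card {A \<in> Pow (insert x Z). shatters F A}"
  proof (rule card_mono)
    show "finite {A \<in> Pow (insert x Z). shatters F A}"
      using insert.hyps(1) by simp
    have "Sh0 \<subseteq> {A \<in> Pow (insert x Z). shatters F A}"
      using insert.hyps(2) shatters_delete_imp_shatters[of x F]
      by (auto simp: Sh0_def F0_def)
    moreover have "insert x ` Sh1 \<subseteq> {A \<in> Pow (insert x Z). shatters F A}"
      using shatters_pairs_imp_shatters_insert[of F x] by (auto simp: Sh1_def F1_def)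
    ultimately show "Sh0 \<union> insert x ` Sh1 \<subseteq> {A \<in> Pow (insert x Z). shatters F A}"
      by blast
  qed
  finally show ?case .
qed

lemma sum_Pow_power_card:
  assumes "finite A"
  shows "(\<Sum>X \<in> Pow A. (t :: 'b :: comm_semiring_1) ^ card X) = (1 + t) ^ card A"
  using prod_add[OF assms, of "\<lambda>_. t" "\<lambda>_. 1"] by (simp add: add.commute)

lemma power_mult_card_small_subsets_le:
  fixes t :: real
  assumes "finite Z" "0 < t" "t \<le> 1"
  shows "t ^ d * card {A \<in> Pow Z. card A \<le> d} \<le> (1 + t) ^ card Z"
proof -
  have "t ^ d * card {A \<in> Pow Z. card A \<le> d} = (\<Sum>A \<in> {A \<in> Pow Z. card A \<le> d}. t ^ d)"
    by simp
  also have "\<dots> \<le> (\<Sum>A \<in> {A \<in> Pow Z. card A \<le> d}. t ^ card A)"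
    using assms(2,3) by (intro sum_mono power_decreasing) auto
  also have "\<dots> \<le> (\<Sum>A \<in> Pow Z. t ^ card A)"
    using assms by (intro sum_mono2) auto
  also have "\<dots> = (1 + t) ^ card Z"
    using assms(1) by (rule sum_Pow_power_card)
  finally show ?thesis .
qed

lemma finite_card_tri_shattered:
  assumes "finite V"
  shows "finite {card X | X. tri_shattered V E X}"
proof (rule finite_subset)
  show "{card X | X. tri_shattered V E X} \<subseteq> card ` Pow V"
    by (auto simp: tri_shattered_def)
qed (use assms in simp)

lemma card_le_tri_vc_dim:
  assumes "finite V" "tri_shattered V E A"
  shows "card A \<le> tri_vc_dim V E"
  unfolding tri_vc_dim_def using assms finite_card_tri_shattered[OF assms(1)]
  by (intro Max_ge) auto

lemma tri_vc_dim_le: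
  assumes "finite V" "\<And>X. tri_shattered V E X \<Longrightarrow> card X \<le> k"
  shows "tri_vc_dim V E \<le> k"
  unfolding tri_vc_dim_def using assms finite_card_tri_shattered[OF assms(1)]
  by (intro Max.boundedI) auto

definition tri_trace :: "'a triedge set \<Rightarrow> 'a set \<Rightarrow> 'a set set" where
  "tri_trace E Z = {Z \<inter> B | B R W. (B, R, W) \<in> E \<and> Z \<inter> R = {}}"

lemma tri_traceI:
  assumes "(B, R, W) \<in> E" "Z \<inter> R = {}" "S = Z \<inter> B"
  shows "S \<in> tri_trace E Z"
  using assms unfolding tri_trace_def by blast

lemma tri_trace_subset_Pow: "tri_trace E Z \<subseteq> Pow Z"
  by (auto simp: tri_trace_def)

lemma shatters_tri_trace_imp_tri_shattered:
  assumes "shatters (tri_trace E Z) A" "A \<subseteq> Z" "Z \<subseteq> V"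
  shows "tri_shattered V E A"
  unfolding tri_shattered_def
proof (intro conjI allI impI)
  show "A \<subseteq> V" using assms(2,3) by blast
  fix Y assume "Y \<subseteq> A"
  then obtain B R W where "(B, R, W) \<in> E" "Z \<inter> R = {}" "A \<inter> (Z \<inter> B) = Y"
    using assms(1) unfolding shatters_def tri_trace_def by blast
  then show "\<exists>(B, R, W) \<in> E. A \<inter> B = Y \<and> A \<inter> (B \<union> R) = Y"
    using assms(2) by blast
qed

lemma power_mult_card_tri_trace_le:
  fixes t :: real
  assumes "finite V" "Z \<subseteq> V" "tri_vc_dim V E \<le> d" "0 < t" "t \<le> 1"
  shows "t ^ d * card (tri_trace E Z) \<le> (1 + t) ^ card Z"
proof -
  have finZ: "finite Z" using assms(1,2) by (rule finite_subset[rotated])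
  have "card (tri_trace E Z) \<le> card {A \<in> Pow Z. shatters (tri_trace E Z) A}"
    using finZ tri_trace_subset_Pow by (rule card_le_card_shattered)
  also have "\<dots> \<le> card {A \<in> Pow Z. card A \<le> d}"
  proof (rule card_mono)
    show "{A \<in> Pow Z. shatters (tri_trace E Z) A} \<subseteq> {A \<in> Pow Z. card A \<le> d}"
    proof clarsimp
      fix A assume "A \<subseteq> Z" "shatters (tri_trace E Z) A"
      then have "tri_shattered V E A"
        using assms(2) by (intro shatters_tri_trace_imp_tri_shattered)
      then show "card A \<le> d"
        using card_le_tri_vc_dim[OF assms(1)] assms(3) by (meson le_trans)
    qed
  qed (use finZ in simp)
  finally have "t ^ d * card (tri_trace E Z) \<le> t ^ d * card {A \<in> Pow Z. card A \<le> d}"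
    using assms(4) by simp
  also have "\<dots> \<le> (1 + t) ^ card Z"
    using finZ assms(4,5) by (rule power_mult_card_small_subsets_le)
  finally show ?thesis .
qed

definition traced_split :: "'a triedge set \<Rightarrow> 'a triedge set \<Rightarrow> 'a set \<Rightarrow> 'a set \<Rightarrow> 'a set \<Rightarrow> bool"
  where "traced_split E1 E2 X Y Z \<longleftrightarrow> Y \<inter> Z \<in> tri_trace E1 Z \<and> Y - Z \<in> tri_trace E2 (X - Z)"

lemma tri_shattered_tri_inter_witness:
  assumes "tri_hypergraph V E1" "tri_hypergraph V E2"
    and "tri_shattered V (tri_inter V E1 E2) X" "Y \<subseteq> X"
  obtains B1 R1 W1 B2 R2 W2 where "(B1, R1, W1) \<in> E1" "(B2, R2, W2) \<in> E2"
    "B1 \<inter> R1 = {}" "B2 \<inter> R2 = {}"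
    "X \<inter> B1 \<inter> B2 = Y" "X \<inter> (B1 \<union> R1) \<inter> (B2 \<union> R2) = Y"
proof -
  obtain e where "e \<in> tri_inter V E1 E2" and e_cuts_Y:
    "case e of (B, R, W) \<Rightarrow> X \<inter> B = Y \<and> X \<inter> (B \<union> R) = Y"
    using assms(3,4) unfolding tri_shattered_def by blast
  then obtain e1 e2 where e: "e1 \<in> E1" "e2 \<in> E2" "e = triedge_inter V e1 e2"
    unfolding tri_inter_def by blast
  obtain B1 R1 W1 B2 R2 W2 where e12: "e1 = (B1, R1, W1)" "e2 = (B2, R2, W2)"
    by (metis prod_cases3)
  show ?thesis
  proof (rule that)
    show "(B1, R1, W1) \<in> E1" "(B2, R2, W2) \<in> E2"
      using e(1,2) e12 by simp_all
    show "B1 \<inter> R1 = {}" "B2 \<inter> R2 = {}"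
      using assms(1,2) e(1,2) e12 unfolding tri_hypergraph_def by fastforce+
    have "X \<inter> (B1 \<inter> B2) = Y"
      "X \<inter> (B1 \<inter> B2 \<union> ((B1 \<union> R1) \<inter> (B2 \<union> R2) - B1 \<inter> B2)) = Y"
      using e_cuts_Y unfolding e(3) e12 triedge_inter_def Let_def by simp_all
    then show "X \<inter> B1 \<inter> B2 = Y" "X \<inter> (B1 \<union> R1) \<inter> (B2 \<union> R2) = Y"
      by blast+
  qed
qed

lemma two_power_card_le_card_traced_splits:
  assumes "tri_hypergraph V E1" "tri_hypergraph V E2"
    and "tri_shattered V (tri_inter V E1 E2) X" and Y: "Y \<subseteq> X"
  shows "2 ^ card Y \<le> card {Z \<in> Pow X. traced_split E1 E2 X Y Z}"
proof -
  obtain B1 R1 W1 B2 R2 W2 where e: "(B1, R1, W1) \<in> E1" "(B2, R2, W2) \<in> E2"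
    "B1 \<inter> R1 = {}" "B2 \<inter> R2 = {}"
    "X \<inter> B1 \<inter> B2 = Y" "X \<inter> (B1 \<union> R1) \<inter> (B2 \<union> R2) = Y"
    using tri_shattered_tri_inter_witness[OF assms] .
  define M where "M = X - (B1 \<union> R1)"
  have "finite X"
    using assms(1,3) by (auto simp: tri_hypergraph_def tri_shattered_def intro: finite_subset)
  have "M \<inter> Y = {}" using e(5) by (auto simp: M_def)
  then have "2 ^ card Y = card ((\<union>) M ` Pow Y)"
    using Y \<open>finite X\<close> by (subst card_image) (auto simp: card_Pow inj_on_def finite_subset)
  also have "\<dots> \<le> card {Z \<in> Pow X. traced_split E1 E2 X Y Z}"
  proof (rule card_mono)
    show "(\<union>) M ` Pow Y \<subseteq> {Z \<in> Pow X. traced_split E1 E2 X Y Z}"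
    proof (rule image_subsetI)
      fix Y' assume "Y' \<in> Pow Y"
      then have Y': "Y' \<subseteq> Y" by simp
      have "Y \<inter> (M \<union> Y') \<in> tri_trace E1 (M \<union> Y')"
        by (rule tri_traceI[OF e(1)]) (use Y' e(3,5) in \<open>auto simp: M_def\<close>)
      moreover have "Y - (M \<union> Y') \<in> tri_trace E2 (X - (M \<union> Y'))"
        by (rule tri_traceI[OF e(2)]) (use Y Y' e(4,5,6) in \<open>auto simp: M_def\<close>)
      moreover have "M \<union> Y' \<subseteq> X"
        using Y Y' by (auto simp: M_def)
      ultimately show "M \<union> Y' \<in> {Z \<in> Pow X. traced_split E1 E2 X Y Z}"
        by (simp add: traced_split_def)
    qed
  qed (use \<open>finite X\<close> in simp)
  finally show ?thesis .
qed

lemma card_Pow_split_le: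
  assumes "finite A" "finite B"
  shows "card {Y \<in> Pow X. Y \<inter> Z \<in> A \<and> Y - Z \<in> B} \<le> card A * card B"
proof -
  have "card {Y \<in> Pow X. Y \<inter> Z \<in> A \<and> Y - Z \<in> B} \<le> card (A \<times> B)"
  proof (rule card_inj_on_le[where f = "\<lambda>Y. (Y \<inter> Z, Y - Z)"])
    show "inj_on (\<lambda>Y. (Y \<inter> Z, Y - Z)) {Y \<in> Pow X. Y \<inter> Z \<in> A \<and> Y - Z \<in> B}"
      by (auto simp: inj_on_def)
  qed (use assms in auto)
  then show ?thesis by (simp add: card_cartesian_product)
qed

lemma power_mult_card_traced_splits_le:
  fixes t :: real
  assumes "finite V" "X \<subseteq> V" "Z \<subseteq> X" "0 < t" "t \<le> 1"
    and "tri_vc_dim V E1 \<le> d" "tri_vc_dim V E2 \<le> d"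
  shows "t ^ (2 * d) * card {Y \<in> Pow X. traced_split E1 E2 X Y Z} \<le> (1 + t) ^ card X"
proof -
  have "finite X" using assms(1,2) by (rule finite_subset[rotated])
  have fin: "finite (tri_trace E Z')" if "Z' \<subseteq> X" for E :: "'a triedge set" and Z'
    using tri_trace_subset_Pow \<open>finite X\<close> that by (meson finite_Pow_iff finite_subset)
  have "card {Y \<in> Pow X. traced_split E1 E2 X Y Z}
        \<le> card (tri_trace E1 Z) * card (tri_trace E2 (X - Z))"
    unfolding traced_split_def using assms(3) by (intro card_Pow_split_le fin) auto
  then have "t ^ (2 * d) * card {Y \<in> Pow X. traced_split E1 E2 X Y Z}
        \<le> t ^ (2 * d) * (card (tri_trace E1 Z) * card (tri_trace E2 (X - Z)))"
    using assms(4) by (intro mult_left_mono) (simp_all flip: of_nat_mult)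
  also have "\<dots> = (t ^ d * card (tri_trace E1 Z)) * (t ^ d * card (tri_trace E2 (X - Z)))"
    by (simp add: power_mult mult_ac flip: power2_eq_square)
  also have "\<dots> \<le> (1 + t) ^ card Z * (1 + t) ^ card (X - Z)"
    using assms by (intro mult_mono power_mult_card_tri_trace_le) auto
  also have "\<dots> = (1 + t) ^ card X"
    using \<open>finite X\<close> assms(3)
    by (simp flip: power_add add: card_Diff_subset card_mono finite_subset)
  finally show ?thesis .
qed

lemma power_mult_three_power_card_le:
  fixes t :: real
  assumes "tri_hypergraph V E1" "tri_hypergraph V E2" "0 < t" "t \<le> 1"
    and "tri_vc_dim V E1 \<le> d" "tri_vc_dim V E2 \<le> d"
    and "tri_shattered V (tri_inter V E1 E2) X"
  shows "t ^ (2 * d) * 3 ^ card X \<le> (2 + 2 * t) ^ card X"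
proof -
  have "finite V" "X \<subseteq> V"
    using assms(1,7) by (simp_all add: tri_hypergraph_def tri_shattered_def)
  then have "finite X" by (rule finite_subset[rotated])
  let ?S = "traced_split E1 E2 X"
  have "(3::real) ^ card X = (\<Sum>Y \<in> Pow X. 2 ^ card Y)"
    using sum_Pow_power_card[OF \<open>finite X\<close>, of "2::real"] by simp
  also have "\<dots> \<le> (\<Sum>Y \<in> Pow X. \<Sum>Z \<in> {Z \<in> Pow X. ?S Y Z}. 1)"
    using two_power_card_le_card_traced_splits[OF assms(1,2,7)]
    by (intro sum_mono) (simp flip: of_nat_le_iff)
  also have "\<dots> = (\<Sum>Z \<in> Pow X. \<Sum>Y \<in> {Y \<in> Pow X. ?S Y Z}. 1)"
    using \<open>finite X\<close> by (intro sum.swap_restrict) simp_all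
  finally have "t ^ (2 * d) * 3 ^ card X
      \<le> t ^ (2 * d) * (\<Sum>Z \<in> Pow X. \<Sum>Y \<in> {Y \<in> Pow X. ?S Y Z}. 1)"
    using assms(3) by (intro mult_left_mono) simp_all
  also have "\<dots> = (\<Sum>Z \<in> Pow X. t ^ (2 * d) * card {Y \<in> Pow X. ?S Y Z})"
    by (simp add: sum_distrib_left)
  also have "\<dots> \<le> (\<Sum>Z \<in> Pow X. (1 + t) ^ card X)"
    using assms \<open>finite V\<close> \<open>X \<subseteq> V\<close>
    by (intro sum_mono power_mult_card_traced_splits_le) auto
  also have "\<dots> = (2 + 2 * t) ^ card X"
    using \<open>finite X\<close> by (simp add: card_Pow power_mult_distrib[symmetric])
  finally show ?thesis .
qed

lemma le_15_mult_if_power_bound: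
  assumes "(1/5::real) ^ (2 * d) * 3 ^ n \<le> (2 + 2 * (1/5)) ^ n"
  shows "n \<le> 15 * d"
proof -
  have "(1/5::real) ^ (2 * d) = 1 / 25 ^ d"
    by (simp add: power_mult power_divide)
  have "(12/5) ^ n * (5/4) ^ n = (3::real) ^ n"
    by (simp flip: power_mult_distrib)
  also have "\<dots> \<le> (12/5) ^ n * 25 ^ d"
    using assms unfolding \<open>(1/5::real) ^ (2 * d) = 1 / 25 ^ d\<close> by (simp add: field_simps)
  finally have "(5/4::real) ^ n \<le> 25 ^ d"
    by simp
  also have "\<dots> \<le> ((5/4) ^ 15) ^ d"
    by (rule power_mono) (simp_all add: power_divide)
  finally show ?thesis
    by (simp flip: power_mult)
qed

lemma tri_vc_dim_tri_inter_le:
  assumes "tri_hypergraph V E1" "tri_hypergraph V E2"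
    and "tri_vc_dim V E1 \<le> d" "tri_vc_dim V E2 \<le> d"
  shows "tri_vc_dim V (tri_inter V E1 E2) \<le> 15 * d"
proof (rule tri_vc_dim_le)
  show "finite V" using assms(1) by (simp add: tri_hypergraph_def)
  fix X assume "tri_shattered V (tri_inter V E1 E2) X"
  with assms show "card X \<le> 15 * d"
    by (intro le_15_mult_if_power_bound power_mult_three_power_card_le[where V = V]) auto
qed

theorem lemma4p5:
  shows "\<exists>C::real. C > 0 \<and>
    (\<forall>(V::nat set) E1 E2 (d::nat).
       tri_hypergraph V E1 \<and> tri_hypergraph V E2 \<and> d \<ge> 1 \<and>
       tri_vc_dim V E1 \<le> d \<and> tri_vc_dim V E2 \<le> d \<longrightarrow>
       real (tri_vc_dim V (tri_inter V E1 E2)) \<le> C * real d)"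
proof (intro exI[of _ 15] conjI allI impI)
  fix V :: "nat set" and E1 E2 and d :: nat
  assume "tri_hypergraph V E1 \<and> tri_hypergraph V E2 \<and> d \<ge> 1 \<and>
       tri_vc_dim V E1 \<le> d \<and> tri_vc_dim V E2 \<le> d"
  then have "tri_vc_dim V (tri_inter V E1 E2) \<le> 15 * d"
    by (intro tri_vc_dim_tri_inter_le) auto
  then show "real (tri_vc_dim V (tri_inter V E1 E2)) \<le> 15 * real d"
    by simp
qed simp

end
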